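(* Consider the system \[ x_{k+1} = x_k - \rho y_k + \hat g(y_k,w_k),\qquad y_{k+1} = (1-\beta)y_k + \hat h(y_{k-1},w_{k-1})\bigl(J(x_k)-J(x_{k-1})\bigr) \] with the setup described in the context. Then for any $k\ge1$, \[ \mathbb{E}[\mu h_{k-1}g_{k-1}\Delta_{k-1}]=\frac{\mu\gamma}{2}\Bigl(\rho^2\mathbb{E}[y_{k-1}^2]-2\rho\,\mathbb{E}[\tilde x_{k-1}y_{k-1}]+\psi\,\mathbb{E}\bigl[(|y_{k-1}|+\varepsilon)^2\bigr]\Bigr). \]
   Context: Setup. Parameters: $\rho>0$, $\beta\in(0,2)$, $\varepsilon>0$, $\omega>0$. The random variables $w_i$, $i\in\mathbb{N}\cup\{0\}$, are i.i.d., each taking the value $-\omega$ or $\omega$ with probability $1/2$. The functions $h,g:\mathbb{R}\to\mathbb{R}$ are odd, satisfy $\mathrm{sign}(g(w))=\mathrm{sign}(h(w))$ for all $w$, and $g(w)=h(w)=0$ if and only if $w=0$. Define $\hat h(y,w):=\frac{h(w)}{|y|+\varepsilon}$ and $\hat g(y,w):=(|y|+\varepsilon)g(w)$. The objective is $J(x)=J^*+\frac{\mu}{2}(x-x^* )^2$ with $\mu>0$, $x^*,J^*\in\mathbb{R}$. The initial data $x_0,y_0$ and the initialization $y_1$ (the $y$-update being applied for $k\ge1$) are deterministic. Notation: $h_k:=h(w_k)$, $g_k:=g(w_k)$, $\tilde x_k:=x_k-x^*$, $\psi:=\mathbb{E}[g_k^2]$, $\gamma:=\mathbb{E}[h_kg_k]$,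 and \[ \Delta_{k-1}:=(\tilde x_{k-1}-\rho y_{k-1})(|y_{k-1}|+\varepsilon)g_{k-1}-\rho\tilde x_{k-1}y_{k-1}+\tfrac{\rho^2}{2}y_{k-1}^2+\tfrac{g_{k-1}^2}{2}(|y_{k-1}|+\varepsilon)^2 . \] *)

theory Defs
  imports "HOL-Probability.Probability"
begin

definition hhat :: "(real \<Rightarrow> real) \<Rightarrow> real \<Rightarrow> real \<Rightarrow> real \<Rightarrow> real" where
  "hhat h eps y w = h w / (\<bar>y\<bar> + eps)"

definition ghat :: "(real \<Rightarrow> real) \<Rightarrow> real \<Rightarrow> real \<Rightarrow> real \<Rightarrow> real" where
  "ghat g eps y w = (\<bar>y\<bar> + eps) * g w"

definition Delta :: "real \<Rightarrow> real \<Rightarrow> real \<Rightarrow> real \<Rightarrow> real \<Rightarrow> real" where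
  "Delta rho eps xt y gv =
     (xt - rho * y) * (\<bar>y\<bar> + eps) * gv - rho * xt * y + rho^2 / 2 * y^2
     + gv^2 / 2 * (\<bar>y\<bar> + eps)^2"

end

theory Submission
  imports Defs
begin

text \<open>
  Put n = k - 1. By the recursion, x_n and y_n are functions of the finitely valued noises
  w_0, ..., w_(n-1), hence independent of w_n. Since w_n = +-omega and h, g are odd,
  h(w_n) g(w_n) = h(omega) g(omega) = gamma and g(w_n)^2 = g(omega)^2 = psi are constants, while
  E[g(w_n)] = 0. So the weight mu h(w_n) g(w_n) leaves the expectation as mu gamma, and the only
  term of Delta that is linear in g(w_n), namely (x_n - x* - rho y_n)(|y_n| + eps) g(w_n),
  factorises under the expectation and vanishes.
\<close>

lemma measurable_from_vimage_algebra:
  assumes "X \<in> measurable M N" and "f \<in> measurable (vimage_algebra (space M) X N) K"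
  shows "f \<in> measurable M K"
proof -
  have "sets (vimage_algebra (space M) X N) \<subseteq> sets M"
    using assms(1) by (intro sets_image_in_sets') (auto dest: measurable_sets)
  then show ?thesis
    using assms(2) measurable_mono[of K K "vimage_algebra (space M) X N" M] by auto
qed

lemma (in prob_space) indep_var_vimage_algebra:
  assumes indep: "indep_var N1 X N2 Y"
    and f: "f \<in> measurable (vimage_algebra (space M) X N1) K1"
    and u: "u \<in> measurable (vimage_algebra (space M) Y N2) K2"
  shows "indep_var K1 f K2 u"
proof -
  have generated_subset: "sigma_sets (space M) {Z -` A \<inter> space M | A. A \<in> sets K}
      \<subseteq> sigma_sets (space M) {V -` B \<inter> space M | B. B \<in> sets N}"
    if "Z \<in> measurable (vimage_algebra (space M) V N) K" for Z V and N :: "'d measure" and K :: "'c measure"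
  proof -
    have "sigma_sets (space M) {Z -` A \<inter> space M | A. A \<in> sets K} \<subseteq> sets (vimage_algebra (space M) V N)"
      using measurable_sets[OF that] sets_vimage_algebra_space
      by (intro sets.sigma_sets_subset') auto
    then show ?thesis by (simp add: sets_vimage_algebra)
  qed
  have "random_variable N1 X" "random_variable N2 Y"
    using indep by (auto simp: indep_var_eq)
  then have "random_variable K1 f" "random_variable K2 u"
    using f u by (auto intro: measurable_from_vimage_algebra)
  moreover have "indep_set (sigma_sets (space M) {f -` A \<inter> space M | A. A \<in> sets K1})
      (sigma_sets (space M) {u -` A \<inter> space M | A. A \<in> sets K2})"
    using indep generated_subset[OF f] generated_subset[OF u]
    unfolding indep_var_eq indep_sets2_eq by blast
  ultimately show ?thesis
    unfolding indep_var_eq by blast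
qed

lemma (in prob_space) integrable_simple_function_real:
  fixes f :: "'a \<Rightarrow> real"
  shows "simple_function M f \<Longrightarrow> integrable M f"
  by (rule integrable_simple_function) simp_all

lemma (in prob_space) expectation_eq_const:
  fixes f :: "'a \<Rightarrow> real"
  assumes "\<And>s. s \<in> space M \<Longrightarrow> f s = c"
  shows "expectation f = c"
proof -
  have "expectation f = expectation (\<lambda>_. c)"
    using assms by (rule Bochner_Integration.integral_cong[OF refl])
  then show ?thesis
    by (simp add: prob_space)
qed

lemma (in prob_space) expectation_odd_symmetric_two_point:
  fixes X :: "'a \<Rightarrow> real" and f :: "real \<Rightarrow> real"
  assumes X: "X \<in> borel_measurable M"
    and two_point: "\<And>s. s \<in> space M \<Longrightarrow> X s = - a \<or> X s = a"
    and symmetric: "prob {s \<in> space M. X s = a} = prob {s \<in> space M. X s = - a}"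
    and odd: "\<And>v. f (- v) = - f v"
  shows "expectation (\<lambda>s. f (X s)) = 0"
proof -
  let ?A = "{s \<in> space M. X s = a}" and ?B = "{s \<in> space M. X s = - a}"
  have events: "?A \<in> events" "?B \<in> events"
    using X by measurable
  have "f (X s) = f a * indicator ?A s - f a * indicator ?B s" if "s \<in> space M" for s
    using two_point[OF that] odd[of a] odd[of 0] that by (auto simp: indicator_def)
  then have "expectation (\<lambda>s. f (X s)) = expectation (\<lambda>s. f a * indicator ?A s - f a * indicator ?B s)"
    by (intro Bochner_Integration.integral_cong) auto
  also have "\<dots> = f a * prob ?A - f a * prob ?B"
    using events by (simp add: emeasure_eq_measure)
  finally show ?thesis
    using symmetric by simp
qed

definition generated_algebra :: "'a measure \<Rightarrow> ('i \<Rightarrow> 'a \<Rightarrow> real) \<Rightarrow> 'i set \<Rightarrow> 'a measure" where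
  "generated_algebra M w I = vimage_algebra (space M) (\<lambda>s. \<lambda>i\<in>I. w i s) (\<Pi>\<^sub>M i\<in>I. borel)"

lemma space_generated_algebra [simp]: "space (generated_algebra M w I) = space M"
  by (simp add: generated_algebra_def)

lemma simple_function_generated_algebra_component:
  assumes "i \<in> I" and "finite (w i ` space M)"
  shows "simple_function (generated_algebra M w I) (w i)"
proof -
  have "(\<lambda>s. \<lambda>i\<in>I. w i s) \<in> measurable (generated_algebra M w I) (\<Pi>\<^sub>M i\<in>I. borel)"
    unfolding generated_algebra_def by (rule measurable_vimage_algebra1) (auto simp: space_PiM)
  then have "(\<lambda>s. (\<lambda>i\<in>I. w i s) i) \<in> borel_measurable (generated_algebra M w I)"
    by (rule measurable_compose[OF _ measurable_component_singleton[OF \<open>i \<in> I\<close>]])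
  then show ?thesis
    using assms by (intro simple_function_borel_measurable) auto
qed

lemma simple_function_of_generated_algebra:
  fixes f :: "'a \<Rightarrow> real"
  assumes "\<And>i. i \<in> I \<Longrightarrow> w i \<in> borel_measurable M"
    and "simple_function (generated_algebra M w I) f"
  shows "simple_function M f"
proof -
  have "(\<lambda>s. \<lambda>i\<in>I. w i s) \<in> measurable M (\<Pi>\<^sub>M i\<in>I. borel)"
    using assms(1) by (rule measurable_restrict)
  then have "f \<in> borel_measurable M"
    using borel_measurable_simple_function[OF assms(2)]
    unfolding generated_algebra_def by (rule measurable_from_vimage_algebra)
  then show ?thesis
    using simple_functionD(1)[OF assms(2)] by (simp add: simple_function_borel_measurable)
qed

lemma (in prob_space) indep_var_generated_algebra:
  assumes "indep_vars (\<lambda>_. borel) w UNIV" and "I \<inter> J = {}"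
    and "f \<in> borel_measurable (generated_algebra M w I)"
    and "u \<in> borel_measurable (generated_algebra M w J)"
  shows "indep_var borel f borel u"
proof -
  have "indep_var (\<Pi>\<^sub>M i\<in>I. borel) (\<lambda>s. \<lambda>i\<in>I. w i s) (\<Pi>\<^sub>M i\<in>J. borel) (\<lambda>s. \<lambda>i\<in>J. w i s)"
    using indep_var_restrict[OF assms(1,2)] by simp
  then show ?thesis
    using assms(3,4) unfolding generated_algebra_def by (rule indep_var_vimage_algebra)
qed

text \<open>
  Working with simple functions rather than measurable ones means that no measurability of
  \<open>h\<close>, \<open>g\<close> or \<open>J\<close> is needed: any function of finitely many simple functions is simple.
\<close>

lemma iterates_simple_function_generated_algebra:
  fixes w x y :: "nat \<Rightarrow> 'a \<Rightarrow> real" and h g J :: "real \<Rightarrow> real"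
  assumes w_finite: "\<And>i. finite (w i ` space M)"
    and x_init: "\<And>s. s \<in> space M \<Longrightarrow> x 0 s = x0"
    and y_init0: "\<And>s. s \<in> space M \<Longrightarrow> y 0 s = y0"
    and y_init1: "\<And>s. s \<in> space M \<Longrightarrow> y 1 s = y1"
    and x_rec: "\<And>n s. s \<in> space M \<Longrightarrow>
        x (Suc n) s = x n s - rho * y n s + ghat g eps (y n s) (w n s)"
    and y_rec: "\<And>n s. n \<ge> 1 \<Longrightarrow> s \<in> space M \<Longrightarrow>
        y (Suc n) s = (1 - beta) * y n s
          + hhat h eps (y (n - 1) s) (w (n - 1) s) * (J (x n s) - J (x (n - 1) s))"
    and "m \<le> n"
  shows "simple_function (generated_algebra M w {..<n}) (x m)
    \<and> simple_function (generated_algebra M w {..<n}) (y m)"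
  using \<open>m \<le> n\<close>
proof (induction m rule: less_induct)
  case (less m)
  let ?sf = "simple_function (generated_algebra M w {..<n})"
  have w: "?sf (w i)" if "i < m" for i
    using that less.prems w_finite by (intro simple_function_generated_algebra_component) auto
  consider "m = 0" | "m = 1" | i where "m = Suc (Suc i)"
    by (metis One_nat_def not0_implies_Suc)
  then show ?case
  proof cases
    case 1
    have "?sf (x m) \<longleftrightarrow> ?sf (\<lambda>_. x0)" "?sf (y m) \<longleftrightarrow> ?sf (\<lambda>_. y0)"
      using 1 x_init y_init0 by - (rule simple_function_cong; simp)+
    then show ?thesis
      by simp
  next
    case 2
    have "?sf (x m) \<longleftrightarrow> ?sf (\<lambda>s. x0 - rho * y0 + ghat g eps y0 (w 0 s))"
        "?sf (y m) \<longleftrightarrow> ?sf (\<lambda>_. y1)"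
      using 2 x_rec[of _ 0] x_init y_init0 y_init1 by - (rule simple_function_cong; simp)+
    moreover have "?sf (\<lambda>s. x0 - rho * y0 + ghat g eps y0 (w 0 s))"
      using w[of 0] 2 by (intro simple_function_add simple_function_compose2[where h="ghat g eps"]) auto
    ultimately show ?thesis
      by simp
  next
    case 3
    have IH: "?sf (x i)" "?sf (y i)" "?sf (x (Suc i))" "?sf (y (Suc i))"
      using less 3 by auto
    have "?sf (x m) \<longleftrightarrow>
        ?sf (\<lambda>s. x (Suc i) s - rho * y (Suc i) s + ghat g eps (y (Suc i) s) (w (Suc i) s))"
        "?sf (y m) \<longleftrightarrow> ?sf (\<lambda>s. (1 - beta) * y (Suc i) s
          + hhat h eps (y i s) (w i s) * (J (x (Suc i) s) - J (x i s)))"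
      using 3 x_rec[of _ "Suc i"] y_rec[of "Suc i"] by - (rule simple_function_cong; simp)+
    moreover have "?sf (\<lambda>s. x (Suc i) s - rho * y (Suc i) s + ghat g eps (y (Suc i) s) (w (Suc i) s))"
      using IH w[of "Suc i"] 3
      by (intro simple_function_add simple_function_diff simple_function_mult
          simple_function_compose2[where h="ghat g eps"]) auto
    moreover have "?sf (\<lambda>s. (1 - beta) * y (Suc i) s
        + hhat h eps (y i s) (w i s) * (J (x (Suc i) s) - J (x i s)))"
      using IH w[of i] 3
      by (intro simple_function_add simple_function_diff simple_function_mult
          simple_function_compose2[where h="hhat h eps"] simple_function_compose1[where g=J]) auto
    ultimately show ?thesis
      by simp
  qed
qed

lemma (in prob_space) expectation_Delta_indep_noise:
  fixes xt yv G :: "'a \<Rightarrow> real"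
  assumes simple: "simple_function M xt" "simple_function M yv" "simple_function M G"
    and indep: "indep_var borel (\<lambda>s. (xt s - rho * yv s) * (\<bar>yv s\<bar> + eps)) borel G"
    and mean_zero: "expectation G = 0"
    and square: "\<And>s. s \<in> space M \<Longrightarrow> (G s)\<^sup>2 = c"
  shows "expectation (\<lambda>s. Delta rho eps (xt s) (yv s) (G s))
    = (rho\<^sup>2 * expectation (\<lambda>s. (yv s)\<^sup>2) - 2 * rho * expectation (\<lambda>s. xt s * yv s)
        + c * expectation (\<lambda>s. (\<bar>yv s\<bar> + eps)\<^sup>2)) / 2"
proof -
  let ?F = "\<lambda>s. (xt s - rho * yv s) * (\<bar>yv s\<bar> + eps)"
  have int: "integrable M ?F" "integrable M G" "integrable M (\<lambda>s. xt s * yv s)"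
      "integrable M (\<lambda>s. (yv s)\<^sup>2)" "integrable M (\<lambda>s. (\<bar>yv s\<bar> + eps)\<^sup>2)"
    using simple_function_compose2[where h="\<lambda>a b. (a - rho * b) * (\<bar>b\<bar> + eps)", OF simple(1,2)]
      simple_function_compose2[where h="(*)", OF simple(1,2)]
      simple_function_compose1[where g="\<lambda>b. b\<^sup>2", OF simple(2)]
      simple_function_compose1[where g="\<lambda>b. (\<bar>b\<bar> + eps)\<^sup>2", OF simple(2)] simple(3)
    by (auto intro: integrable_simple_function_real)
  have cross: "expectation (\<lambda>s. ?F s * G s) = 0"
    using indep_var_lebesgue_integral[OF indep int(1,2)] mean_zero by simp
  have "expectation (\<lambda>s. Delta rho eps (xt s) (yv s) (G s))
      = expectation (\<lambda>s. ?F s * G s - rho * (xt s * yv s) + rho\<^sup>2 / 2 * (yv s)\<^sup>2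
          + c / 2 * (\<bar>yv s\<bar> + eps)\<^sup>2)"
    by (intro Bochner_Integration.integral_cong) (auto simp: Delta_def square[symmetric] algebra_simps)
  also have "\<dots> = expectation (\<lambda>s. ?F s * G s) - rho * expectation (\<lambda>s. xt s * yv s)
      + rho\<^sup>2 / 2 * expectation (\<lambda>s. (yv s)\<^sup>2) + c / 2 * expectation (\<lambda>s. (\<bar>yv s\<bar> + eps)\<^sup>2)"
    using int indep_var_integrable[OF indep int(1,2)] by simp
  finally show ?thesis
    using cross by (simp add: field_simps)
qed

theorem lemma4:
  fixes M :: "'a measure"
    and w x y :: "nat \<Rightarrow> 'a \<Rightarrow> real"
    and h g J :: "real \<Rightarrow> real"
    and rho beta eps omega mu xstar Jstar x0 y0 y1 :: real
    and k :: nat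
  assumes "prob_space M"
    and "rho > 0" and "0 < beta" and "beta < 2" and "eps > 0" and "omega > 0"
    and indep: "prob_space.indep_vars M (\<lambda>_. borel) w UNIV"
    and wvals: "\<And>i s. s \<in> space M \<Longrightarrow> w i s = - omega \<or> w i s = omega"
    and wplus: "\<And>i. measure M {s \<in> space M. w i s = omega} = 1/2"
    and wminus: "\<And>i. measure M {s \<in> space M. w i s = - omega} = 1/2"
    and h_odd: "\<And>v. h (- v) = - h v"
    and g_odd: "\<And>v. g (- v) = - g v"
    and sgn_gh: "\<And>v. sgn (g v) = sgn (h v)"
    and g_zero: "\<And>v. g v = 0 \<longleftrightarrow> v = 0"
    and h_zero: "\<And>v. h v = 0 \<longleftrightarrow> v = 0"
    and "mu > 0"
    and J_def: "\<And>z. J z = Jstar + mu / 2 * (z - xstar)^2"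
    and x_init: "\<And>s. s \<in> space M \<Longrightarrow> x 0 s = x0"
    and y_init0: "\<And>s. s \<in> space M \<Longrightarrow> y 0 s = y0"
    and y_init1: "\<And>s. s \<in> space M \<Longrightarrow> y 1 s = y1"
    and x_rec: "\<And>n s. s \<in> space M \<Longrightarrow>
        x (Suc n) s = x n s - rho * y n s + ghat g eps (y n s) (w n s)"
    and y_rec: "\<And>n s. n \<ge> 1 \<Longrightarrow> s \<in> space M \<Longrightarrow>
        y (Suc n) s = (1 - beta) * y n s
          + hhat h eps (y (n - 1) s) (w (n - 1) s) * (J (x n s) - J (x (n - 1) s))"
    and "k \<ge> 1"
  shows "(let psi = integral\<^sup>L M (\<lambda>s. (g (w (k - 1) s))^2);
              gamma = integral\<^sup>L M (\<lambda>s. h (w (k - 1) s) * g (w (k - 1) s))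
          in integral\<^sup>L M (\<lambda>s. mu * h (w (k - 1) s) * g (w (k - 1) s)
                 * Delta rho eps (x (k - 1) s - xstar) (y (k - 1) s) (g (w (k - 1) s)))
             = mu * gamma / 2 *
                 (rho^2 * integral\<^sup>L M (\<lambda>s. (y (k - 1) s)^2)
                  - 2 * rho * integral\<^sup>L M (\<lambda>s. (x (k - 1) s - xstar) * y (k - 1) s)
                  + psi * integral\<^sup>L M (\<lambda>s. (\<bar>y (k - 1) s\<bar> + eps)^2)))"
proof -
  interpret prob_space M by fact
  define n where "n = k - 1"
  let ?past = "generated_algebra M w {..<n}" and ?G = "\<lambda>s. g (w n s)"
  have w_meas: "w i \<in> borel_measurable M" for i
    using indep unfolding indep_vars_def2 by auto
  have w_finite: "finite (w i ` space M)" for i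
    by (rule finite_subset[of _ "{- omega, omega}"]) (use wvals in auto)
  have x: "simple_function ?past (x n)" and y: "simple_function ?past (y n)"
    using iterates_simple_function_generated_algebra[OF w_finite x_init y_init0 y_init1 x_rec y_rec, of n n]
    by auto
  have xt: "simple_function ?past (\<lambda>s. x n s - xstar)"
    by (rule simple_function_compose1[where g="\<lambda>a. a - xstar", OF x])
  have F: "simple_function ?past (\<lambda>s. (x n s - xstar - rho * y n s) * (\<bar>y n s\<bar> + eps))"
    by (rule simple_function_compose2[where h="\<lambda>a b. (a - xstar - rho * b) * (\<bar>b\<bar> + eps)", OF x y])
  have noise: "simple_function (generated_algebra M w {n}) ?G"
    by (rule simple_function_compose1[OF simple_function_generated_algebra_component[OF _ w_finite]]) simp
  have hg: "h (w n s) * ?G s = h omega * g omega" and g_sq: "(?G s)\<^sup>2 = (g omega)\<^sup>2"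
    if "s \<in> space M" for s
    using wvals[OF that, of n] h_odd[of omega] g_odd[of omega] by auto
  have mean_zero: "expectation ?G = 0"
    using wplus[of n] wminus[of n] w_meas[of n] wvals[of _ n] g_odd
    by (intro expectation_odd_symmetric_two_point[where X="w n" and a=omega]) auto
  have indep_noise: "indep_var borel (\<lambda>s. (x n s - xstar - rho * y n s) * (\<bar>y n s\<bar> + eps)) borel ?G"
    by (rule indep_var_generated_algebra[OF indep _ borel_measurable_simple_function[OF F]
          borel_measurable_simple_function[OF noise]]) simp
  have "simple_function M (\<lambda>s. x n s - xstar)" "simple_function M (y n)" "simple_function M ?G"
    using xt y noise by (simp_all add: simple_function_of_generated_algebra[OF w_meas])
  note Delta = expectation_Delta_indep_noise[OF this indep_noise mean_zero g_sq]
  have "expectation (\<lambda>s. mu * h (w n s) * ?G s * Delta rho eps (x n s - xstar) (y n s) (?G s))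
      = expectation (\<lambda>s. mu * (h omega * g omega) * Delta rho eps (x n s - xstar) (y n s) (?G s))"
    using hg by (intro Bochner_Integration.integral_cong) (auto simp: mult.assoc)
  moreover have "expectation (\<lambda>s. h (w n s) * ?G s) = h omega * g omega"
    using hg by (rule expectation_eq_const)
  moreover have "expectation (\<lambda>s. (?G s)\<^sup>2) = (g omega)\<^sup>2"
    using g_sq by (rule expectation_eq_const)
  ultimately show ?thesis
    unfolding n_def[symmetric] Let_def using Delta by simp
qed

end
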